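(* Let $n\in\mathbb N$ and let $X\in\mathcal H$ be independent of $\mathcal F_n$. Suppose either (i) $X$ is bounded below, or (ii) $X\in L^1_b$. Then $\mathcal E_n(X)=\mathcal E(X)$ q.s.
   Context: Standing setting. $(\Omega,\mathcal F)$ is a measurable space with a discrete-time filtration $(\mathcal F_t)_{t\in\mathbb N}$, $\mathcal F_0$ trivial and $\mathcal F=\sigma(\bigcup_t\mathcal F_t)$. $\mathcal H$ is a linear space of $\mathcal F$-measurable real functions on $\Omega$ containing the constants, such that $X\in\mathcal H$ implies $|X|\in\mathcal H$ and $I_AX\in\mathcal H$ for all $A\in\mathcal F$; $\mathcal H_t:=\{X\in\mathcal H: X \text{ is } \mathcal F_t\text{-measurable}\}$. $(\mathcal E_t)$ is an $\mathcal{SL}$-expectation (a family of maps $\mathcal E_t:\mathcal H\to\mathcal H_t$ that are monotone, time-consistent $\mathcal E_s\circ\mathcal E_t=\mathcal E_s$ for $s\le t$, satisfy $\mathcal E_t(I_AY)=I_A\mathcal E_t(Y)$ for $A\in\mathcal F_t$, $\mathcal E_t(Y)=Y$ for $Y\in\mathcal H_t$, are subadditive, satisfy $\mathcal E_t(\lambda Y)=\lambda^+\mathcal E_t(Y)+\lambda^-\mathcal E_t(-Y)$ for $\lambda\in\mathcal H_t$, and $\mathcal E_0(X_i)\to0$ whenever $X_i\downarrow0$ pointwise); $\mathcal E:=\mathcal E_0$. "q.s." means outside a set $N$ with $\mathcal E(I_N)=0$. Independence: a random variable $Y\in\mathcal H$ is independent of $Z=(Z_1,\dots,Z_k)$ ($Z_i\in\mathcal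 H$) under $\mathcal E$ if for every measurable $\varphi$ on $\mathbb R^{k+1}$ with $\varphi(Z,Y)\in\mathcal H$ and $\varphi(z,Y)\in\mathcal H$ for all $z$, one has $\mathcal E[\varphi(Z,Y)]=\mathcal E[\bar\varphi(Z)]$ where $\bar\varphi(z):=\mathcal E[\varphi(z,Y)]$. $X$ is independent of $\mathcal F_n$ if $X$ is independent of $I_A$ for every $A\in\mathcal F_n$. $\|X\|_1:=\mathcal E(|X|)$; $L^1$ is the completion of $\{X\in\mathcal H:\|X\|_1<\infty\}$ modulo null elements; $L^1_b$ is the completion of the bounded elements of $\mathcal H$ under $\|\cdot\|_1$, equivalently $L^1_b=\{X\in L^1:\lim_{n\to\infty}\mathcal E(|X|I_{\{|X|>n\}})=0\}$. *)

theory Defs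
  imports "HOL-Analysis.Analysis"
begin

definition meas :: "'a set set \<Rightarrow> ('a \<Rightarrow> real) \<Rightarrow> bool" where
  "meas S X \<longleftrightarrow> (\<forall>B\<in>sets borel. X -` B \<in> S)"

definition filtration :: "(nat \<Rightarrow> 'a set set) \<Rightarrow> bool" where
  "filtration F \<longleftrightarrow> (\<forall>t. sigma_algebra UNIV (F t)) \<and> (\<forall>s t. s \<le> t \<longrightarrow> F s \<subseteq> F t)
     \<and> F 0 = {{}, UNIV}"

definition Finf :: "(nat \<Rightarrow> 'a set set) \<Rightarrow> 'a set set" where
  "Finf F = sigma_sets UNIV (\<Union>t. F t)"

definition Hspace :: "(nat \<Rightarrow> 'a set set) \<Rightarrow> ('a \<Rightarrow> real) set \<Rightarrow> bool" where
  "Hspace F H \<longleftrightarrow>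
     (\<forall>X\<in>H. meas (Finf F) X) \<and>
     (\<forall>X\<in>H. \<forall>Y\<in>H. (\<lambda>\<omega>. X \<omega> + Y \<omega>) \<in> H) \<and>
     (\<forall>c. \<forall>X\<in>H. (\<lambda>\<omega>. c * X \<omega>) \<in> H) \<and>
     (\<forall>c. (\<lambda>_. c) \<in> H) \<and>
     (\<forall>X\<in>H. (\<lambda>\<omega>. \<bar>X \<omega>\<bar>) \<in> H) \<and>
     (\<forall>X\<in>H. \<forall>A\<in>Finf F. (\<lambda>\<omega>. indicator A \<omega> * X \<omega>) \<in> H)"

definition Ht :: "(nat \<Rightarrow> 'a set set) \<Rightarrow> ('a \<Rightarrow> real) set \<Rightarrow> nat \<Rightarrow> ('a \<Rightarrow> real) set" where
  "Ht F H t = {X \<in> H. meas (F t) X}"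

text \<open>The unconditional expectation E = E_0 (constant since F 0 is trivial; we read off
  its value at an arbitrary fixed point).\<close>
definition EE :: "(nat \<Rightarrow> ('a \<Rightarrow> real) \<Rightarrow> ('a \<Rightarrow> real)) \<Rightarrow> ('a \<Rightarrow> real) \<Rightarrow> real" where
  "EE E X = E 0 X undefined"

definition SL_expectation ::
  "(nat \<Rightarrow> 'a set set) \<Rightarrow> ('a \<Rightarrow> real) set \<Rightarrow> (nat \<Rightarrow> ('a \<Rightarrow> real) \<Rightarrow> ('a \<Rightarrow> real)) \<Rightarrow> bool" where
  "SL_expectation F H E \<longleftrightarrow>
     (\<forall>t. \<forall>X\<in>H. E t X \<in> Ht F H t) \<and>
     (\<forall>t. \<forall>X\<in>H. \<forall>Y\<in>H. (\<forall>\<omega>. X \<omega> \<le> Y \<omega>) \<longrightarrow> (\<forall>\<omega>. E t X \<omega> \<le> E t Y \<omega>)) \<and>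
     (\<forall>s t. \<forall>X\<in>H. s \<le> t \<longrightarrow> E s (E t X) = E s X) \<and>
     (\<forall>t. \<forall>A\<in>F t. \<forall>Y\<in>H. E t (\<lambda>\<omega>. indicator A \<omega> * Y \<omega>) = (\<lambda>\<omega>. indicator A \<omega> * E t Y \<omega>)) \<and>
     (\<forall>t. \<forall>Y\<in>Ht F H t. E t Y = Y) \<and>
     (\<forall>t. \<forall>X\<in>H. \<forall>Y\<in>H. \<forall>\<omega>. E t (\<lambda>\<omega>. X \<omega> + Y \<omega>) \<omega> \<le> E t X \<omega> + E t Y \<omega>) \<and>
     (\<forall>t. \<forall>l\<in>Ht F H t. \<forall>Y\<in>H.
        E t (\<lambda>\<omega>. l \<omega> * Y \<omega>) =
        (\<lambda>\<omega>. max (l \<omega>) 0 * E t Y \<omega> + max (- l \<omega>) 0 * E t (\<lambda>\<omega>. - Y \<omega>) \<omega>)) \<and>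
     (\<forall>Xs. (\<forall>i. Xs i \<in> H) \<longrightarrow> (\<forall>\<omega>. decseq (\<lambda>i. Xs i \<omega>) \<and> (\<lambda>i. Xs i \<omega>) \<longlonglongrightarrow> 0)
        \<longrightarrow> (\<lambda>i. EE E (Xs i)) \<longlonglongrightarrow> 0)"

definition indep_of :: "('a \<Rightarrow> real) set \<Rightarrow> (nat \<Rightarrow> ('a \<Rightarrow> real) \<Rightarrow> ('a \<Rightarrow> real))
    \<Rightarrow> ('a \<Rightarrow> real) \<Rightarrow> ('a \<Rightarrow> real) \<Rightarrow> bool" where
  "indep_of H E Y Z \<longleftrightarrow>
     (\<forall>\<phi> :: real \<times> real \<Rightarrow> real. \<phi> \<in> borel_measurable borel \<longrightarrow>
        (\<lambda>\<omega>. \<phi> (Z \<omega>, Y \<omega>)) \<in> H \<longrightarrow> (\<forall>z. (\<lambda>\<omega>. \<phi> (z, Y \<omega>)) \<in> H) \<longrightarrow>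
        EE E (\<lambda>\<omega>. \<phi> (Z \<omega>, Y \<omega>)) = EE E (\<lambda>\<omega>. (\<lambda>z. EE E (\<lambda>\<omega>'. \<phi> (z, Y \<omega>'))) (Z \<omega>)))"

definition indep_of_F :: "(nat \<Rightarrow> 'a set set) \<Rightarrow> ('a \<Rightarrow> real) set
    \<Rightarrow> (nat \<Rightarrow> ('a \<Rightarrow> real) \<Rightarrow> ('a \<Rightarrow> real)) \<Rightarrow> ('a \<Rightarrow> real) \<Rightarrow> nat \<Rightarrow> bool" where
  "indep_of_F F H E X n \<longleftrightarrow> (\<forall>A\<in>F n. indep_of H E X (indicator A))"

text \<open>Membership in L^1_b for an element of H, via the characterization
  lim E(|X| I_{|X|>n}) = 0 (norm ||X||_1 = E|X| is finite for real-valued E).\<close>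
definition in_L1b :: "(nat \<Rightarrow> ('a \<Rightarrow> real) \<Rightarrow> ('a \<Rightarrow> real)) \<Rightarrow> ('a \<Rightarrow> real) \<Rightarrow> bool" where
  "in_L1b E X \<longleftrightarrow>
     (\<lambda>n::nat. EE E (\<lambda>\<omega>. \<bar>X \<omega>\<bar> * indicator {\<omega>'. \<bar>X \<omega>'\<bar> > real n} \<omega>)) \<longlonglongrightarrow> 0"

definition qs_eq :: "(nat \<Rightarrow> 'a set set) \<Rightarrow> (nat \<Rightarrow> ('a \<Rightarrow> real) \<Rightarrow> ('a \<Rightarrow> real))
    \<Rightarrow> ('a \<Rightarrow> real) \<Rightarrow> ('a \<Rightarrow> real) \<Rightarrow> bool" where
  "qs_eq F E X Y \<longleftrightarrow> (\<exists>N\<in>Finf F. EE E (indicator N) = 0 \<and> (\<forall>\<omega>. \<omega> \<notin> N \<longrightarrow> X \<omega> = Y \<omega>))"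

end

theory Submission
  imports Defs
begin

(* Let Y = E_n X and c = E X.  The proof shows that the F_n-measurable sets
   {Y >= c + eps} and {Y <= c - eps} are E-null for every eps > 0; their union
   over eps = 1/(k+1) is {Y ~= c}, which is then null by continuity of E from
   above. *)

locale sl_space =
  fixes F :: "nat \<Rightarrow> 'a set set" and H :: "('a \<Rightarrow> real) set"
    and E :: "nat \<Rightarrow> ('a \<Rightarrow> real) \<Rightarrow> ('a \<Rightarrow> real)"
  assumes filtration: "filtration F" and Hspace: "Hspace F H"
    and SL: "SL_expectation F H E"
begin

lemma F_sigma_algebra: "sigma_algebra UNIV (F t)"
  using filtration unfolding filtration_def by blast

lemma F_compl: "A \<in> F t \<Longrightarrow> - A \<in> F t"
  using algebra.compl_sets[OF sigma_algebra.axioms(1)[OF F_sigma_algebra]]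
  by (simp add: Compl_eq_Diff_UNIV)

lemma F_Finf: "A \<in> F t \<Longrightarrow> A \<in> Finf F"
  unfolding Finf_def by (rule sigma_sets.Basic) blast

lemma Finf_Un: "A \<in> Finf F \<Longrightarrow> B \<in> Finf F \<Longrightarrow> A \<union> B \<in> Finf F"
  unfolding Finf_def by (rule sigma_sets_Un)

lemma Finf_UN: "(\<And>k::nat. N k \<in> Finf F) \<Longrightarrow> (\<Union>k. N k) \<in> Finf F"
  unfolding Finf_def by (rule sigma_sets.Union)

lemma const_H: "(\<lambda>_. c) \<in> H"
  using Hspace unfolding Hspace_def by blast

lemma add_H: "X \<in> H \<Longrightarrow> Y \<in> H \<Longrightarrow> (\<lambda>\<omega>. X \<omega> + Y \<omega>) \<in> H"
  using Hspace unfolding Hspace_def by blast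

lemma scale_H: "X \<in> H \<Longrightarrow> (\<lambda>\<omega>. c * X \<omega>) \<in> H"
  using Hspace unfolding Hspace_def by blast

lemma indicator_mult_H: "A \<in> Finf F \<Longrightarrow> X \<in> H \<Longrightarrow> (\<lambda>\<omega>. indicator A \<omega> * X \<omega>) \<in> H"
  using Hspace unfolding Hspace_def by blast

lemma indicator_H: "A \<in> Finf F \<Longrightarrow> indicator A \<in> H"
  using indicator_mult_H[OF _ const_H, of A 1] by simp

lemma paste_H:
  "A \<in> Finf F \<Longrightarrow> - A \<in> Finf F \<Longrightarrow> X \<in> H \<Longrightarrow> Y \<in> H \<Longrightarrow>
   (\<lambda>\<omega>. indicator A \<omega> * X \<omega> + indicator (- A) \<omega> * Y \<omega>) \<in> H"
  by (intro add_H indicator_mult_H)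

lemma const_Ht: "(\<lambda>_. c) \<in> Ht F H t"
proof -
  have "(\<lambda>_::'a. c) -` B \<in> F t" for B :: "real set"
  proof -
    have "{} \<in> F t" "UNIV \<in> F t"
      using F_sigma_algebra[of t] by (auto simp: sigma_algebra_iff2)
    moreover have "(\<lambda>_::'a. c) -` B = {} \<or> (\<lambda>_::'a. c) -` B = UNIV" by auto
    ultimately show ?thesis by auto
  qed
  then show ?thesis unfolding Ht_def meas_def using const_H by auto
qed

lemmas SL_unfolded = SL[unfolded SL_expectation_def]
lemmas SL_axioms =
  SL_unfolded[THEN conjunct1]
  SL_unfolded[THEN conjunct2, THEN conjunct1]
  SL_unfolded[THEN conjunct2, THEN conjunct2, THEN conjunct1]
  SL_unfolded[THEN conjunct2, THEN conjunct2, THEN conjunct2, THEN conjunct1]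
  SL_unfolded[THEN conjunct2, THEN conjunct2, THEN conjunct2, THEN conjunct2, THEN conjunct1]
  SL_unfolded[THEN conjunct2, THEN conjunct2, THEN conjunct2, THEN conjunct2, THEN conjunct2, THEN conjunct1]
  SL_unfolded[THEN conjunct2, THEN conjunct2, THEN conjunct2, THEN conjunct2, THEN conjunct2, THEN conjunct2, THEN conjunct1]
  SL_unfolded[THEN conjunct2, THEN conjunct2, THEN conjunct2, THEN conjunct2, THEN conjunct2, THEN conjunct2, THEN conjunct2]

lemma E_Ht: "X \<in> H \<Longrightarrow> E t X \<in> Ht F H t"
  using SL_axioms(1) by blast

lemma E_H: "X \<in> H \<Longrightarrow> E t X \<in> H"
  using E_Ht unfolding Ht_def by blast

lemma E_mono: "X \<in> H \<Longrightarrow> Y \<in> H \<Longrightarrow> (\<And>\<omega>. X \<omega> \<le> Y \<omega>) \<Longrightarrow> E t X \<omega> \<le> E t Y \<omega>"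
  using SL_axioms(2) by blast

lemma E_tower: "X \<in> H \<Longrightarrow> s \<le> t \<Longrightarrow> E s (E t X) = E s X"
  using SL_axioms(3) by blast

lemma E_indicator_mult:
  "A \<in> F t \<Longrightarrow> Y \<in> H \<Longrightarrow> E t (\<lambda>\<omega>. indicator A \<omega> * Y \<omega>) = (\<lambda>\<omega>. indicator A \<omega> * E t Y \<omega>)"
  using SL_axioms(4) by blast

lemma E_const: "E t (\<lambda>_. c) = (\<lambda>_. c)"
  using SL_axioms(5) const_Ht by blast

lemma E_subadd: "X \<in> H \<Longrightarrow> Y \<in> H \<Longrightarrow> E t (\<lambda>\<omega>. X \<omega> + Y \<omega>) \<omega> \<le> E t X \<omega> + E t Y \<omega>"
  using SL_axioms(6) by blast

lemma E_mult_Ht: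
  "l \<in> Ht F H t \<Longrightarrow> Y \<in> H \<Longrightarrow> E t (\<lambda>\<omega>. l \<omega> * Y \<omega>) =
     (\<lambda>\<omega>. max (l \<omega>) 0 * E t Y \<omega> + max (- l \<omega>) 0 * E t (\<lambda>\<omega>. - Y \<omega>) \<omega>)"
  using SL_axioms(7) by blast

lemma EE_continuous:
  "(\<And>i. Xs i \<in> H) \<Longrightarrow> (\<And>\<omega>. decseq (\<lambda>i. Xs i \<omega>)) \<Longrightarrow> (\<And>\<omega>. (\<lambda>i. Xs i \<omega>) \<longlonglongrightarrow> 0)
   \<Longrightarrow> (\<lambda>i. EE E (Xs i)) \<longlonglongrightarrow> 0"
  using SL_axioms(8) by blast

lemma E_pos_homogeneous: "X \<in> H \<Longrightarrow> b \<ge> 0 \<Longrightarrow> E t (\<lambda>\<omega>. b * X \<omega>) = (\<lambda>\<omega>. b * E t X \<omega>)"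
  using E_mult_Ht[OF const_Ht[of b t]] by (simp add: max_def)

text \<open>Constants can be pulled out (both inequalities follow from subadditivity).\<close>
lemma E_translate: "X \<in> H \<Longrightarrow> E t (\<lambda>\<omega>. X \<omega> + a) \<omega> = E t X \<omega> + a"
proof -
  assume X: "X \<in> H"
  have "E t (\<lambda>\<omega>. X \<omega> + a) \<omega> \<le> E t X \<omega> + a"
    using E_subadd[OF X const_H[of a]] by (simp add: E_const)
  moreover have "E t X \<omega> \<le> E t (\<lambda>\<omega>. X \<omega> + a) \<omega> - a"
    using E_subadd[OF add_H[OF X const_H[of a]] const_H[of "- a"]] by (simp add: E_const)
  ultimately show ?thesis by linarith
qed

lemma E_paste:
  assumes A: "A \<in> F t" and X: "X \<in> H" and Y: "Y \<in> H"
  shows "E t (\<lambda>\<omega>. indicator A \<omega> * X \<omega> + indicator (- A) \<omega> * Y \<omega>) =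
         (\<lambda>\<omega>. indicator A \<omega> * E t X \<omega> + indicator (- A) \<omega> * E t Y \<omega>)"
    (is "E t ?U = _")
proof
  fix \<omega>
  have UH: "?U \<in> H" by (rule paste_H[OF F_Finf[OF A] F_Finf[OF F_compl[OF A]] X Y])
  have "(\<lambda>\<omega>. indicator A \<omega> * ?U \<omega>) = (\<lambda>\<omega>. indicator A \<omega> * X \<omega>)"
       "(\<lambda>\<omega>. indicator (- A) \<omega> * ?U \<omega>) = (\<lambda>\<omega>. indicator (- A) \<omega> * Y \<omega>)"
    by (auto simp: indicator_def)
  then have "indicator A \<omega> * E t ?U \<omega> = indicator A \<omega> * E t X \<omega>"
            "indicator (- A) \<omega> * E t ?U \<omega> = indicator (- A) \<omega> * E t Y \<omega>"
    using E_indicator_mult[OF A UH] E_indicator_mult[OF A X]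
      E_indicator_mult[OF F_compl[OF A] UH] E_indicator_mult[OF F_compl[OF A] Y]
    by metis+
  then show "E t ?U \<omega> = indicator A \<omega> * E t X \<omega> + indicator (- A) \<omega> * E t Y \<omega>"
    by (cases "\<omega> \<in> A") auto
qed

lemma EE_mono: "X \<in> H \<Longrightarrow> Y \<in> H \<Longrightarrow> (\<And>\<omega>. X \<omega> \<le> Y \<omega>) \<Longrightarrow> EE E X \<le> EE E Y"
  unfolding EE_def by (rule E_mono)

lemma EE_const: "EE E (\<lambda>_. c) = c"
  unfolding EE_def by (simp add: E_const)

lemma E_level_set: "X \<in> H \<Longrightarrow> B \<in> sets borel \<Longrightarrow> {\<omega>. E t X \<omega> \<in> B} \<in> F t"
  using E_Ht unfolding Ht_def meas_def vimage_def by blast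

subsection \<open>Null sets\<close>

definition null :: "'a set \<Rightarrow> bool" where
  "null N \<longleftrightarrow> N \<in> Finf F \<and> EE E (indicator N) = 0"

lemma EE_indicator_nonneg: "A \<in> Finf F \<Longrightarrow> EE E (indicator A) \<ge> 0"
  using EE_mono[OF const_H indicator_H, of A 0] EE_const by simp

lemma qs_eq_if_null: "null N \<Longrightarrow> (\<And>\<omega>. \<omega> \<notin> N \<Longrightarrow> X \<omega> = Y \<omega>) \<Longrightarrow> qs_eq F E X Y"
  unfolding qs_eq_def null_def by blast

lemma null_if_EE_shift_le:
  assumes A: "A \<in> Finf F" and eps: "\<epsilon> > 0"
    and le: "EE E (\<lambda>\<omega>. \<epsilon> * indicator A \<omega> + d) \<le> d"
  shows "null A"
proof -
  have "EE E (\<lambda>\<omega>. \<epsilon> * indicator A \<omega> + d) = \<epsilon> * EE E (indicator A) + d"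
    unfolding EE_def
    using E_translate[OF scale_H[OF indicator_H[OF A]]] E_pos_homogeneous[OF indicator_H[OF A]] eps
    by simp
  then have "EE E (indicator A) \<le> 0"
    using le eps by (simp add: mult_le_0_iff)
  then show ?thesis
    using EE_indicator_nonneg[OF A] A unfolding null_def by simp
qed

lemma null_Un: "null A \<Longrightarrow> null B \<Longrightarrow> null (A \<union> B)"
proof -
  assume A: "null A" and B: "null B"
  then have AF: "A \<in> Finf F" and BF: "B \<in> Finf F" unfolding null_def by auto
  have "EE E (indicator (A \<union> B)) \<le> EE E (\<lambda>\<omega>. indicator A \<omega> + indicator B \<omega>)"
    by (rule EE_mono[OF indicator_H[OF Finf_Un[OF AF BF]] add_H[OF indicator_H[OF AF] indicator_H[OF BF]]])
      (auto simp: indicator_def)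
  also have "\<dots> \<le> EE E (indicator A) + EE E (indicator B)"
    unfolding EE_def by (rule E_subadd[OF indicator_H[OF AF] indicator_H[OF BF]])
  finally show ?thesis
    using A B EE_indicator_nonneg[OF Finf_Un[OF AF BF]] Finf_Un[OF AF BF] unfolding null_def by simp
qed

text \<open>Continuity from above turns into continuity from below on null sets:
  \<open>I_{\<Union>N} - I_{N k}\<close> decreases pointwise to \<open>0\<close>.\<close>
lemma null_incseq_Union:
  assumes null: "\<And>k. null (N k)" and inc: "incseq N"
  shows "null (\<Union>k. N k)"
proof -
  have NF: "N k \<in> Finf F" for k using null unfolding null_def by blast
  have UF: "(\<Union>k. N k) \<in> Finf F" by (rule Finf_UN[OF NF])
  define D where "D k = (\<lambda>\<omega>. indicator (\<Union>k. N k) \<omega> - indicator (N k) \<omega> :: real)" for k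
  have DH: "D k \<in> H" for k
    using add_H[OF indicator_H[OF UF] scale_H[OF indicator_H[OF NF], where c = "- 1"]]
    unfolding D_def by simp
  have "decseq (\<lambda>k. D k \<omega>)" for \<omega>
    using inc unfolding D_def incseq_def decseq_def by (auto simp: indicator_def)
  moreover have "(\<lambda>k. D k \<omega>) \<longlonglongrightarrow> 0" for \<omega>
  proof (cases "\<omega> \<in> (\<Union>k. N k)")
    case True
    then obtain k0 where "\<omega> \<in> N k0" by blast
    then have "\<forall>k\<ge>k0. D k \<omega> = 0"
      using inc unfolding D_def incseq_def by (auto simp: indicator_def)
    then show ?thesis
      by (intro tendsto_eventually) (auto simp: eventually_sequentially)
  next
    case False
    then show ?thesis unfolding D_def by (simp add: indicator_def)
  qed
  ultimately have lim: "(\<lambda>k. EE E (D k)) \<longlonglongrightarrow> 0"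
    by (rule EE_continuous[OF DH])
  have "EE E (indicator (\<Union>k. N k)) \<le> EE E (D k)" for k
  proof -
    have "indicator (\<Union>k. N k) = (\<lambda>\<omega>. indicator (N k) \<omega> + D k \<omega>)"
      unfolding D_def by auto
    then have "EE E (indicator (\<Union>k. N k)) \<le> EE E (indicator (N k)) + EE E (D k)"
      unfolding EE_def using E_subadd[OF indicator_H[OF NF] DH] by simp
    then show ?thesis using null unfolding null_def by simp
  qed
  then have "EE E (indicator (\<Union>k. N k)) \<le> 0"
    using LIMSEQ_le_const[OF lim] by blast
  then show ?thesis
    using EE_indicator_nonneg[OF UF] UF unfolding null_def by simp
qed

subsection \<open>Independence\<close>

text \<open>The only use of independence: testing it with \<open>\<phi>(z, x) = z x + (1 - z) k\<close>
  and \<open>Z = I_A\<close>, together with the tower property, shows that replacing \<open>E_n X\<close>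
  by the constant \<open>E X\<close> on an \<open>F_n\<close>-set does not change the expectation.\<close>
lemma EE_paste_indep:
  assumes X: "X \<in> H" and ind: "indep_of_F F H E X n" and A: "A \<in> F n"
  shows "EE E (\<lambda>\<omega>. indicator A \<omega> * E n X \<omega> + indicator (- A) \<omega> * k) =
         EE E (\<lambda>\<omega>. indicator A \<omega> * EE E X + indicator (- A) \<omega> * k)"
proof -
  define \<phi> where "\<phi> = (\<lambda>p::real \<times> real. fst p * snd p + (1 - fst p) * k)"
  define U where "U = (\<lambda>\<omega>. indicator A \<omega> * X \<omega> + indicator (- A) \<omega> * k)"
  have UH: "U \<in> H" unfolding U_def
    using paste_H[OF F_Finf[OF A] F_Finf[OF F_compl[OF A]] X const_H] by simp
  have "EE E (\<lambda>\<omega>. indicator A \<omega> * E n X \<omega> + indicator (- A) \<omega> * k) = EE E (E n U)"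
    using E_paste[OF A X const_H, of k] unfolding U_def by (simp add: E_const)
  also have "\<dots> = EE E U"
    unfolding EE_def by (simp add: E_tower[OF UH])
  also have "\<dots> = EE E (\<lambda>\<omega>. \<phi> (indicator A \<omega>, X \<omega>))"
    unfolding U_def \<phi>_def by (simp add: indicator_compl)
  also have "\<dots> = EE E (\<lambda>\<omega>. EE E (\<lambda>\<omega>'. \<phi> (indicator A \<omega>, X \<omega>')))"
  proof -
    have "\<phi> \<in> borel_measurable borel"
      unfolding \<phi>_def borel_prod[symmetric] by measurable
    moreover have "(\<lambda>\<omega>. \<phi> (indicator A \<omega>, X \<omega>)) \<in> H"
      using UH unfolding U_def \<phi>_def by (simp add: indicator_compl)
    moreover have "(\<lambda>\<omega>. \<phi> (z, X \<omega>)) \<in> H" for z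
      using add_H[OF scale_H[OF X] const_H, of z "(1 - z) * k"] unfolding \<phi>_def by simp
    moreover have "indep_of H E X (indicator A)"
      using ind A unfolding indep_of_F_def by blast
    ultimately show ?thesis unfolding indep_of_def by blast
  qed
  also have "\<dots> = EE E (\<lambda>\<omega>. indicator A \<omega> * EE E X + indicator (- A) \<omega> * k)"
    by (rule arg_cong[where f = "EE E"]) (auto simp: \<phi>_def indicator_def EE_const)
  finally show ?thesis .
qed

lemma null_upper_deviation:
  assumes X: "X \<in> H" and ind: "indep_of_F F H E X n" and eps: "\<epsilon> > 0"
  shows "null {\<omega>. E n X \<omega> \<ge> EE E X + \<epsilon>}"
proof -
  define c where "c = EE E X"
  define A where "A = {\<omega>. E n X \<omega> \<ge> c + \<epsilon>}"
  have A: "A \<in> F n" unfolding A_def using E_level_set[OF X, of "{c + \<epsilon>..}" n] by simp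
  have AF: "A \<in> Finf F" "- A \<in> Finf F" using F_Finf A F_compl by auto
  have "EE E (\<lambda>\<omega>. \<epsilon> * indicator A \<omega> + c)
      \<le> EE E (\<lambda>\<omega>. indicator A \<omega> * E n X \<omega> + indicator (- A) \<omega> * c)"
    by (rule EE_mono[OF add_H[OF scale_H[OF indicator_H[OF AF(1)]] const_H] paste_H[OF AF E_H[OF X] const_H]])
      (auto simp: indicator_def A_def)
  also have "\<dots> = EE E (\<lambda>\<omega>. indicator A \<omega> * c + indicator (- A) \<omega> * c)"
    using EE_paste_indep[OF X ind A] unfolding c_def .
  also have "\<dots> = c"
    using EE_const[of c] by (simp add: indicator_compl algebra_simps)
  finally have "null A" by (rule null_if_EE_shift_le[OF AF(1) eps])
  then show ?thesis unfolding A_def c_def .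
qed

lemma null_lower_deviation:
  assumes X: "X \<in> H" and ind: "indep_of_F F H E X n" and eps: "\<epsilon> > 0"
  shows "null {\<omega>. E n X \<omega> \<le> EE E X - \<epsilon>}"
proof -
  define c where "c = EE E X"
  define A where "A = {\<omega>. E n X \<omega> \<le> c - \<epsilon>}"
  have A: "A \<in> F n" unfolding A_def using E_level_set[OF X, of "{..c - \<epsilon>}" n] by simp
  have AF: "A \<in> Finf F" "- A \<in> Finf F" using F_Finf A F_compl by auto
  have "EE E (\<lambda>\<omega>. \<epsilon> * indicator A \<omega> + (c - \<epsilon>))
      = EE E (\<lambda>\<omega>. indicator A \<omega> * c + indicator (- A) \<omega> * (c - \<epsilon>))"
    by (simp add: indicator_compl algebra_simps)
  also have "\<dots> = EE E (\<lambda>\<omega>. indicator A \<omega> * E n X \<omega> + indicator (- A) \<omega> * (c - \<epsilon>))"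
    using EE_paste_indep[OF X ind A] unfolding c_def by simp
  also have "\<dots> \<le> EE E (\<lambda>_. c - \<epsilon>)"
    by (rule EE_mono[OF paste_H[OF AF E_H[OF X] const_H] const_H])
      (auto simp: indicator_def A_def)
  also have "\<dots> = c - \<epsilon>" by (rule EE_const)
  finally have "null A" by (rule null_if_EE_shift_le[OF AF(1) eps])
  then show ?thesis unfolding A_def c_def .
qed

theorem indep_cond_expectation_qs_const:
  assumes X: "X \<in> H" and ind: "indep_of_F F H E X n"
  shows "qs_eq F E (E n X) (\<lambda>_. EE E X)"
proof -
  define c where "c = EE E X"
  define N where "N k = {\<omega>. E n X \<omega> \<ge> c + 1 / Suc k} \<union> {\<omega>. E n X \<omega> \<le> c - 1 / Suc k}" for k
  have "null (N k)" for k
    unfolding N_def c_def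
    by (intro null_Un null_upper_deviation null_lower_deviation X ind) simp_all
  moreover have "incseq N"
  proof (rule incseq_SucI, rule subsetI)
    fix k \<omega>
    assume "\<omega> \<in> N k"
    moreover have "1 / real (Suc (Suc k)) \<le> 1 / Suc k" by (simp add: frac_le)
    ultimately show "\<omega> \<in> N (Suc k)" unfolding N_def by auto
  qed
  ultimately have "null (\<Union>k. N k)" by (rule null_incseq_Union)
  moreover have "E n X \<omega> = c" if "\<omega> \<notin> (\<Union>k. N k)" for \<omega>
  proof (rule ccontr)
    assume "E n X \<omega> \<noteq> c"
    then obtain k where k: "1 / real (Suc k) < \<bar>E n X \<omega> - c\<bar>"
      using reals_Archimedean[of "\<bar>E n X \<omega> - c\<bar>"] by (auto simp: inverse_eq_divide)
    have "\<omega> \<in> N k"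
    proof (cases "E n X \<omega> \<ge> c")
      case True
      then show ?thesis using k unfolding N_def by simp
    next
      case False
      then show ?thesis using k unfolding N_def by simp
    qed
    then show False using that by blast
  qed
  ultimately show ?thesis unfolding c_def by (rule qs_eq_if_null)
qed

end

theorem lemma4p3:
  fixes F :: "nat \<Rightarrow> 'a set set" and H :: "('a \<Rightarrow> real) set"
    and E :: "nat \<Rightarrow> ('a \<Rightarrow> real) \<Rightarrow> ('a \<Rightarrow> real)" and X :: "'a \<Rightarrow> real" and n :: nat
  assumes "filtration F" and "Hspace F H" and "SL_expectation F H E"
    and "X \<in> H" and "indep_of_F F H E X n"
    and "(\<exists>c. \<forall>\<omega>. c \<le> X \<omega>) \<or> in_L1b E X"
  shows "qs_eq F E (E n X) (\<lambda>_. EE E X)"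
proof -
  interpret sl_space F H E using assms(1-3) by unfold_locales
  show ?thesis using indep_cond_expectation_qs_const[OF assms(4,5)] .
qed

end
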